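(* Let $0\le\alpha<n$, $m$ a nonnegative integer, $0<\eta\le1$, $0<\delta<\min\{\eta,(n-\alpha)/m\}$, $1\le r\le\infty$, $\tilde\alpha=m\delta+\alpha$, $\tilde\delta\le\delta$. A pair of weights $(w,v)$ belongs to $\mathbb{H}(r,\tilde\alpha,\tilde\delta)$ if and only if there is $C$ such that the two inequalities $$|B|^{\frac{\tilde\alpha-\tilde\delta}{n}-\frac1r}\Big(\frac{1}{|B|}\int_Bv^{r'}(y)\,dy\Big)^{1/r'}\le C\frac{w(B)}{|B|}\quad\text{(local)}$$ and $$|B|^{\frac{\delta-\tilde\delta}{n}}\Big(\int_{\mathbb{R}^n\setminus B}\frac{v^{r'}(y)}{|x_B-y|^{r'(n-\tilde\alpha+\delta)}}dy\Big)^{1/r'}\le C\frac{w(B)}{|B|}\quad\text{(global)}$$ hold simultaneously for every ball $B\subset\mathbb{R}^n$ with center $x_B$.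
   Context: A weight is a nonnegative locally integrable function; $w(B)=\int_Bw$; $r'$ is the conjugate exponent, and when $r'=\infty$ the $L^{r'}$ averages/integrals are read as $L^\infty$ norms. $(w,v)\in\mathbb{H}(r,\tilde\alpha,\tilde\delta)$ means that for some $C$ and every ball $B$: if $1<r\le\infty$, $|B|^{(\delta-\tilde\delta)/n}\big(\int\frac{v^{r'}(y)}{(|B|^{1/n}+|x_B-y|)^{r'(n-\tilde\alpha+\delta)}}dy\big)^{1/r'}\le C\frac{w(B)}{|B|}$; if $r=1$, $|B|^{(\delta-\tilde\delta)/n}\big\|\frac{v(\cdot)}{(|B|^{1/n}+|x_B-\cdot|)^{n-\tilde\alpha+\delta}}\big\|_\infty\le C\frac{w(B)}{|B|}$. If $m=0$, $(n-\alpha)/m$ is read as $+\infty$. *)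

theory Defs
  imports "HOL-Analysis.Analysis" "HOL-Probability.Essential_Supremum"
begin

definition weight :: "('a::euclidean_space \<Rightarrow> real) \<Rightarrow> bool" where
  "weight w \<longleftrightarrow> (\<forall>x. 0 \<le> w x) \<and> (\<forall>K. compact K \<longrightarrow> set_integrable lebesgue K w)"

definition conj_exp :: "ereal \<Rightarrow> ereal" where
  "conj_exp r = (if r = 1 then \<infinity> else if r = \<infinity> then 1
                 else ereal (real_of_ereal r / (real_of_ereal r - 1)))"

definition inv_exp :: "ereal \<Rightarrow> real" where
  "inv_exp r = (if r = \<infinity> then 0 else 1 / real_of_ereal r)"

definition root_ereal :: "real \<Rightarrow> ennreal \<Rightarrow> ereal" where
  "root_ereal p I = (if I = \<infinity> then \<infinity> else ereal (enn2real I powr (1 / p)))"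

text \<open>The class H(r, alpha~, delta~) (depending also on delta), on R^n with n = DIM('a).
  Balls B = ball x rho, rho > 0; |B| is Lebesgue measure, w(B) the integral of w over B.\<close>
definition inH :: "ereal \<Rightarrow> real \<Rightarrow> real \<Rightarrow> real \<Rightarrow>
    ('a::euclidean_space \<Rightarrow> real) \<Rightarrow> ('a \<Rightarrow> real) \<Rightarrow> bool" where
  "inH r alt dt d w v \<longleftrightarrow> (\<exists>C::real. \<forall>x::'a. \<forall>\<rho>>0.
     (let B = ball x \<rho>; mB = measure lebesgue B; N = real DIM('a);
          r' = real_of_ereal (conj_exp r) in
      ereal (mB powr ((d - dt) / N)) *
        (if 1 < r then
           root_ereal r' (\<integral>\<^sup>+ y. ennreal (v y powr r' /
               (mB powr (1 / N) + norm (x - y)) powr (r' * (N - alt + d))) \<partial>lebesgue)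
         else esssup lebesgue (\<lambda>y. ereal (v y / (mB powr (1 / N) + norm (x - y)) powr (N - alt + d))))
      \<le> ereal (C * set_lebesgue_integral lebesgue B w / mB)))"

definition local_cond :: "ereal \<Rightarrow> real \<Rightarrow> real \<Rightarrow> real \<Rightarrow>
    ('a::euclidean_space \<Rightarrow> real) \<Rightarrow> ('a \<Rightarrow> real) \<Rightarrow> 'a \<Rightarrow> real \<Rightarrow> bool" where
  "local_cond r alt dt C w v x \<rho> \<longleftrightarrow>
     (let B = ball x \<rho>; mB = measure lebesgue B; N = real DIM('a);
          r' = real_of_ereal (conj_exp r) in
      ereal (mB powr ((alt - dt) / N - inv_exp r)) *
        (if 1 < r then
           root_ereal r' (ennreal (1 / mB) * (\<integral>\<^sup>+ y\<in>B. ennreal (v y powr r') \<partial>lebesgue))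
         else esssup (restrict_space lebesgue B) (\<lambda>y. ereal (v y)))
      \<le> ereal (C * set_lebesgue_integral lebesgue B w / mB))"

definition global_cond :: "ereal \<Rightarrow> real \<Rightarrow> real \<Rightarrow> real \<Rightarrow> real \<Rightarrow>
    ('a::euclidean_space \<Rightarrow> real) \<Rightarrow> ('a \<Rightarrow> real) \<Rightarrow> 'a \<Rightarrow> real \<Rightarrow> bool" where
  "global_cond r alt dt d C w v x \<rho> \<longleftrightarrow>
     (let B = ball x \<rho>; mB = measure lebesgue B; N = real DIM('a);
          r' = real_of_ereal (conj_exp r) in
      ereal (mB powr ((d - dt) / N)) *
        (if 1 < r then
           root_ereal r' (\<integral>\<^sup>+ y\<in>(UNIV - B). ennreal (v y powr r' /
               norm (x - y) powr (r' * (N - alt + d))) \<partial>lebesgue)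
         else esssup (restrict_space lebesgue (UNIV - B))
                (\<lambda>y. ereal (v y / norm (x - y) powr (N - alt + d))))
      \<le> ereal (C * set_lebesgue_integral lebesgue B w / mB))"

end

theory Submission
  imports Defs
begin

(* On a ball B with centre x_B, the kernel |B|^(1/n) + |x_B - y| of the H condition is comparable,
   with constants depending only on n, to the split kernel that equals |B|^(1/n) on B and
   |x_B - y| off B.  For the split kernel the integral (r > 1) or essential supremum (r = 1) in the
   H condition separates into a part over B and a part off B.  In the part over B the factor
   |B|^(-(n - alpha~ + delta)/n) turns |B|^((delta - delta~)/n) into |B|^((alpha~ - delta~)/n - 1),
   which is the power in the local condition once its average over B is written out. *)

lemma divide_powr_comparable:
  fixes g e k c a :: real
  assumes "0 \<le> g" "0 < e" "e \<le> k" "k \<le> c * e" "0 \<le> a"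
  shows "g / k powr a \<le> g / e powr a" and "g / e powr a \<le> c powr a * (g / k powr a)"
proof -
  show "g / k powr a \<le> g / e powr a"
    using assms by (intro divide_left_mono powr_mono2) auto
  have "0 < c * e"
    using assms by linarith
  then have "0 < c"
    using assms(2) by (simp add: zero_less_mult_iff)
  have "k powr a \<le> (c * e) powr a"
    using assms by (intro powr_mono2) auto
  then have "k powr a \<le> c powr a * e powr a"
    by (simp only: powr_mult)
  have "g / e powr a = c powr a * g / (c powr a * e powr a)"
    using \<open>0 < c\<close> by simp
  also have "\<dots> \<le> c powr a * g / k powr a"
    using assms \<open>k powr a \<le> c powr a * e powr a\<close> by (intro frac_le) auto
  finally show "g / e powr a \<le> c powr a * (g / k powr a)"
    by simp
qed

lemma powr_inverse_le_iff:
  fixes i t q :: real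
  assumes "0 \<le> i" "0 < q"
  shows "i powr (1 / q) \<le> t \<longleftrightarrow> 0 \<le> t \<and> i \<le> t powr q"
proof
  assume root_le: "i powr (1 / q) \<le> t"
  then have "0 \<le> t"
    using powr_ge_zero order_trans by blast
  have "i = (i powr (1 / q)) powr q"
    using assms by (simp add: powr_powr)
  also have "\<dots> \<le> t powr q"
    using root_le assms by (intro powr_mono2) auto
  finally show "0 \<le> t \<and> i \<le> t powr q"
    using \<open>0 \<le> t\<close> by simp
next
  assume bound: "0 \<le> t \<and> i \<le> t powr q"
  then have "i powr (1 / q) \<le> (t powr q) powr (1 / q)"
    using assms by (intro powr_mono2) auto
  also have "\<dots> = t"
    using assms bound by (simp add: powr_powr)
  finally show "i powr (1 / q) \<le> t" .
qed

lemma ereal_mult_le_ereal_iff: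
  assumes "0 < A"
  shows "ereal A * X \<le> ereal T \<longleftrightarrow> X \<le> ereal (T / A)"
  using assms by (cases X) (auto simp: field_simps)

lemma ereal_mult_esssup_le_iff:
  assumes "0 < A" "f \<in> borel_measurable M"
  shows "ereal A * esssup M f \<le> ereal T \<longleftrightarrow> (AE y in M. f y \<le> ereal (T / A))"
  using esssup_AE[of f M] esssup_I[OF assms(2)]
  by (auto simp: ereal_mult_le_ereal_iff[OF assms(1)] elim: eventually_mono)

lemma ereal_mult_root_ereal_le_iff:
  assumes "0 < A" "0 < q"
  shows "ereal A * root_ereal q I \<le> ereal T \<longleftrightarrow> 0 \<le> T / A \<and> I \<le> ennreal ((T / A) powr q)"
proof (cases "I = \<infinity>")
  case False
  then obtain i where I: "I = ennreal i" "0 \<le> i"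
    by (cases I) auto
  have "ereal A * root_ereal q I \<le> ereal T \<longleftrightarrow> i powr (1 / q) \<le> T / A"
    using assms I by (simp add: root_ereal_def field_simps)
  then show ?thesis
    using I assms by (simp add: powr_inverse_le_iff)
next
  case True
  then have infinite: "ereal A * root_ereal q I = \<infinity>"
    using assms by (simp add: root_ereal_def)
  show ?thesis
    unfolding infinite using True by (simp add: not_le)
qed

lemma ennreal_mult_le_ennreal_iff:
  assumes "0 < c" "0 \<le> b"
  shows "ennreal c * X \<le> ennreal b \<longleftrightarrow> X \<le> ennreal (b / c)"
proof (cases X rule: ennreal_cases)
  case (real r)
  then show ?thesis
    using assms by (simp add: ennreal_mult[symmetric] pos_le_divide_eq mult.commute)
qed (use assms in \<open>simp add: ennreal_mult_top top_unique\<close>)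

lemma conj_exp_finite:
  assumes "1 < r"
  obtains q where "conj_exp r = ereal q" "1 \<le> q" "inv_exp r + 1 / q = 1"
proof (cases r)
  case (real R)
  with assms have "1 < R"
    by simp
  show ?thesis
    by (rule that[of "R / (R - 1)"])
       (use real \<open>1 < R\<close> in \<open>auto simp: conj_exp_def inv_exp_def field_simps\<close>)
next
  case PInf
  then show ?thesis
    by (intro that[of 1]) (auto simp: conj_exp_def inv_exp_def)
qed (use assms in simp)

lemma weight_borel_measurable:
  fixes v :: "'a::euclidean_space \<Rightarrow> real"
  assumes "weight v"
  shows "v \<in> borel_measurable lebesgue"
proof (rule borel_measurable_LIMSEQ_real)
  fix i :: nat
  have "set_integrable lebesgue (cball 0 (real i)) v"
    using assms unfolding weight_def by auto
  then show "(\<lambda>y. indicator (cball 0 (real i)) y * v y) \<in> borel_measurable lebesgue"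
    unfolding set_integrable_def by (auto dest: borel_measurable_integrable)
next
  fix y :: 'a
  obtain n :: nat where "norm y \<le> real n"
    using real_arch_simple by blast
  then have "\<forall>\<^sub>F i in sequentially. indicator (cball 0 (real i)) y * v y = v y"
    unfolding eventually_sequentially by (intro exI[of _ n]) (auto simp: indicator_def)
  then show "(\<lambda>i. indicator (cball 0 (real i)) y * v y) \<longlonglongrightarrow> v y"
    by (rule tendsto_eventually)
qed

lemma lebesgue_measurable_ident [measurable]: "(\<lambda>y::'a::euclidean_space. y) \<in> lebesgue \<rightarrow>\<^sub>M borel"
  by (rule measurable_completion) simp

lemma lebesgue_sets_ball [measurable]: "ball (x::'a::euclidean_space) r \<in> sets lebesgue"
  by simp

definition unit_ball_root :: "nat \<Rightarrow> real" where
  "unit_ball_root n = unit_ball_vol (real n) powr (1 / real n)"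

definition kernel_const :: "nat \<Rightarrow> real" where
  "kernel_const n = 1 + unit_ball_root n + 1 / unit_ball_root n"

lemma unit_ball_root_pos: "0 < unit_ball_root n"
proof -
  have "unit_ball_vol (real n) \<noteq> 0"
    using unit_ball_vol_pos[of "real n"] by linarith
  then show ?thesis
    unfolding unit_ball_root_def by simp
qed

lemma measure_lebesgue_ball:
  fixes x :: "'a::euclidean_space"
  assumes "0 \<le> \<rho>"
  shows "measure lebesgue (ball x \<rho>) = unit_ball_vol (real DIM('a)) * \<rho> ^ DIM('a)"
  using content_ball[of \<rho> x] assms by simp

lemma measure_lebesgue_ball_root:
  fixes x :: "'a::euclidean_space"
  assumes "0 < \<rho>"
  shows "measure lebesgue (ball x \<rho>) powr (1 / real DIM('a)) = unit_ball_root DIM('a) * \<rho>"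
proof -
  have "(\<rho> ^ DIM('a)) powr (1 / real DIM('a)) = \<rho>"
    using assms by (simp add: powr_realpow[symmetric] powr_powr)
  then show ?thesis
    unfolding measure_lebesgue_ball[OF less_imp_le[OF assms]] unit_ball_root_def
    by (simp add: powr_mult)
qed

definition H_cond :: "ereal \<Rightarrow> real \<Rightarrow> real \<Rightarrow> real \<Rightarrow> real \<Rightarrow>
    ('a::euclidean_space \<Rightarrow> real) \<Rightarrow> ('a \<Rightarrow> real) \<Rightarrow> 'a \<Rightarrow> real \<Rightarrow> bool" where
  "H_cond r alt dt d C w v x \<rho> \<longleftrightarrow>
     (let B = ball x \<rho>; mB = measure lebesgue B; N = real DIM('a);
          r' = real_of_ereal (conj_exp r) in
      ereal (mB powr ((d - dt) / N)) *
        (if 1 < r then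
           root_ereal r' (\<integral>\<^sup>+ y. ennreal (v y powr r' /
               (mB powr (1 / N) + norm (x - y)) powr (r' * (N - alt + d))) \<partial>lebesgue)
         else esssup lebesgue (\<lambda>y. ereal (v y / (mB powr (1 / N) + norm (x - y)) powr (N - alt + d))))
      \<le> ereal (C * set_lebesgue_integral lebesgue B w / mB))"

lemma inH_iff_H_cond: "inH r alt dt d w v \<longleftrightarrow> (\<exists>C. \<forall>x. \<forall>\<rho>>0. H_cond r alt dt d C w v x \<rho>)"
  unfolding inH_def H_cond_def ..

locale ball_conditions =
  fixes v w :: "'a::euclidean_space \<Rightarrow> real" and alt dt d p :: real and x :: 'a and \<rho> :: real
  assumes v_measurable: "v \<in> borel_measurable lebesgue"
    and v_nonneg: "\<And>y. 0 \<le> v y"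
    and kernel_exp_eq: "p = real DIM('a) - alt + d"
    and kernel_exp_pos: "0 < p"
    and radius_pos: "0 < \<rho>"
begin

declare v_measurable [measurable]

definition vol :: real where
  "vol = measure lebesgue (ball x \<rho>)"

definition rad :: real where
  "rad = vol powr (1 / real DIM('a))"

(* The common threshold of the three conditions at B: after division by |B|^((delta - delta~)/n),
   each bounds its essential supremum by level C (r = 1) or its integral by level C powr r' (r > 1). *)
definition level :: "real \<Rightarrow> real" where
  "level C = C * set_lebesgue_integral lebesgue (ball x \<rho>) w / vol / vol powr ((d - dt) / real DIM('a))"

definition split_dist :: "'a \<Rightarrow> real" where
  "split_dist y = (if y \<in> ball x \<rho> then rad else norm (x - y))"

lemma vol_pos: "0 < vol"
  unfolding vol_def using radius_pos by (simp add: measure_lebesgue_ball)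

lemma rad_eq: "rad = unit_ball_root DIM('a) * \<rho>"
  unfolding rad_def vol_def by (rule measure_lebesgue_ball_root[OF radius_pos])

lemma rad_pos: "0 < rad"
  using rad_eq unit_ball_root_pos radius_pos by simp

lemma vol_neq_zero: "vol \<noteq> 0"
  using vol_pos by simp

lemma rad_neq_zero: "rad \<noteq> 0"
  using rad_pos by simp

lemma level_scale: "level (k * C) = k * level C"
  unfolding level_def by simp

lemma vol_powr_local_exp:
  "vol powr ((alt - dt) / real DIM('a) - 1 + s) =
     vol powr s * vol powr ((d - dt) / real DIM('a)) / rad powr p"
proof -
  have "rad powr p = vol powr (p / real DIM('a))"
    unfolding rad_def kernel_exp_eq by (simp add: powr_powr)
  moreover have "(alt - dt) / real DIM('a) - 1 + s = s + (d - dt) / real DIM('a) - p / real DIM('a)"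
    unfolding kernel_exp_eq by (simp add: field_simps)
  ultimately show ?thesis
    by (simp add: powr_add powr_diff)
qed

lemma split_dist_pos: "0 < split_dist y"
  unfolding split_dist_def using rad_pos radius_pos by (auto simp: dist_norm)

lemma split_dist_le_kernel: "split_dist y \<le> rad + norm (x - y)"
  unfolding split_dist_def using rad_pos by auto

lemma kernel_le_split_dist: "rad + norm (x - y) \<le> kernel_const DIM('a) * split_dist y"
proof -
  define \<kappa> where "\<kappa> = unit_ball_root DIM('a)"
  have \<kappa>: "0 < \<kappa>" "rad = \<kappa> * \<rho>"
    unfolding \<kappa>_def using unit_ball_root_pos rad_eq by auto
  have expand: "kernel_const DIM('a) * s = s + \<kappa> * s + s / \<kappa>" for s
    unfolding kernel_const_def \<kappa>_def[symmetric] by (simp add: algebra_simps)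
  show ?thesis
  proof (cases "y \<in> ball x \<rho>")
    case True
    then have "norm (x - y) \<le> rad / \<kappa>"
      using \<kappa> by (simp add: dist_norm)
    moreover have "0 \<le> \<kappa> * rad"
      using \<kappa> rad_pos by simp
    ultimately show ?thesis
      using True by (simp add: split_dist_def expand)
  next
    case False
    then have "rad \<le> \<kappa> * norm (x - y)"
      using \<kappa> by (simp add: dist_norm)
    moreover have "0 \<le> norm (x - y) / \<kappa>"
      using \<kappa> by simp
    ultimately show ?thesis
      using False by (simp add: split_dist_def expand)
  qed
qed

lemma nn_integral_split_dist:
  assumes [measurable]: "g \<in> borel_measurable lebesgue"
  shows "(\<integral>\<^sup>+ y. ennreal (g y / split_dist y powr a) \<partial>lebesgue) =
    ennreal (rad powr - a) * (\<integral>\<^sup>+ y\<in>ball x \<rho>. ennreal (g y) \<partial>lebesgue) +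
    (\<integral>\<^sup>+ y\<in>UNIV - ball x \<rho>. ennreal (g y / norm (x - y) powr a) \<partial>lebesgue)"
proof -
  have split: "ennreal (g y / split_dist y powr a) =
      ennreal (rad powr - a) * (ennreal (g y) * indicator (ball x \<rho>) y) +
      ennreal (g y / norm (x - y) powr a) * indicator (UNIV - ball x \<rho>) y" for y
  proof (cases "y \<in> ball x \<rho>")
    case True
    have "g y / rad powr a = rad powr - a * g y"
      by (simp add: powr_minus divide_inverse mult.commute)
    then show ?thesis
      using True by (simp add: split_dist_def ennreal_mult')
  qed (simp add: split_dist_def)
  have "(\<integral>\<^sup>+ y. ennreal (g y / split_dist y powr a) \<partial>lebesgue) =
      (\<integral>\<^sup>+ y. ennreal (rad powr - a) * (ennreal (g y) * indicator (ball x \<rho>) y) \<partial>lebesgue) +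
      (\<integral>\<^sup>+ y\<in>UNIV - ball x \<rho>. ennreal (g y / norm (x - y) powr a) \<partial>lebesgue)"
    unfolding split by (rule nn_integral_add) measurable
  also have "(\<integral>\<^sup>+ y. ennreal (rad powr - a) * (ennreal (g y) * indicator (ball x \<rho>) y) \<partial>lebesgue) =
      ennreal (rad powr - a) * (\<integral>\<^sup>+ y\<in>ball x \<rho>. ennreal (g y) \<partial>lebesgue)"
    by (rule nn_integral_cmult) measurable
  finally show ?thesis .
qed

lemma kernel_comparable:
  assumes "0 \<le> g" "0 \<le> a"
  shows "g / (rad + norm (x - y)) powr a \<le> g / split_dist y powr a"
    and "g / split_dist y powr a \<le> kernel_const DIM('a) powr a * (g / (rad + norm (x - y)) powr a)"
  using divide_powr_comparable[OF assms(1) split_dist_pos split_dist_le_kernel kernel_le_split_dist assms(2)]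
  by auto

lemma nn_integral_kernel_le_split_dist:
  assumes "\<And>y. 0 \<le> g y" "0 \<le> a"
  shows "(\<integral>\<^sup>+ y. ennreal (g y / (rad + norm (x - y)) powr a) \<partial>lebesgue)
    \<le> (\<integral>\<^sup>+ y. ennreal (g y / split_dist y powr a) \<partial>lebesgue)"
  using assms kernel_comparable(1) by (intro nn_integral_mono ennreal_leI) auto

lemma nn_integral_split_dist_le_kernel:
  assumes [measurable]: "g \<in> borel_measurable lebesgue"
    and "\<And>y. 0 \<le> g y" "0 \<le> a"
  shows "(\<integral>\<^sup>+ y. ennreal (g y / split_dist y powr a) \<partial>lebesgue)
    \<le> ennreal (kernel_const DIM('a) powr a) * (\<integral>\<^sup>+ y. ennreal (g y / (rad + norm (x - y)) powr a) \<partial>lebesgue)"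
proof -
  have "(\<integral>\<^sup>+ y. ennreal (g y / split_dist y powr a) \<partial>lebesgue)
      \<le> (\<integral>\<^sup>+ y. ennreal (kernel_const DIM('a) powr a) * ennreal (g y / (rad + norm (x - y)) powr a) \<partial>lebesgue)"
    using assms(2,3) kernel_comparable(2)
    by (intro nn_integral_mono) (simp add: ennreal_mult'[symmetric] ennreal_leI)
  also have "\<dots> = ennreal (kernel_const DIM('a) powr a) * (\<integral>\<^sup>+ y. ennreal (g y / (rad + norm (x - y)) powr a) \<partial>lebesgue)"
    by (rule nn_integral_cmult) measurable
  finally show ?thesis .
qed

lemma H_cond_one_iff:
  "H_cond 1 alt dt d C w v x \<rho> \<longleftrightarrow>
    (AE y in lebesgue. v y / (rad + norm (x - y)) powr p \<le> level C)"
proof -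
  have "(\<lambda>y. ereal (v y / (rad + norm (x - y)) powr p)) \<in> borel_measurable lebesgue"
    by measurable
  then show ?thesis
    unfolding H_cond_def Let_def vol_def[symmetric] rad_def[symmetric] kernel_exp_eq[symmetric]
      if_not_P[OF less_irrefl]
    by (subst ereal_mult_esssup_le_iff) (simp_all add: vol_neq_zero level_def)
qed

lemma local_cond_one_iff:
  "local_cond 1 alt dt C w v x \<rho> \<longleftrightarrow>
    (AE y in lebesgue. y \<in> ball x \<rho> \<longrightarrow> v y / rad powr p \<le> level C)"
proof -
  have exp: "vol powr ((alt - dt) / real DIM('a) - inv_exp 1) =
      vol powr ((d - dt) / real DIM('a)) / rad powr p"
    using vol_powr_local_exp[of 0] by (simp add: inv_exp_def)
  have "(\<lambda>y. ereal (v y)) \<in> borel_measurable (restrict_space lebesgue (ball x \<rho>))"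
    by (rule measurable_restrict_space1) measurable
  then have "local_cond 1 alt dt C w v x \<rho> \<longleftrightarrow>
      (AE y in restrict_space lebesgue (ball x \<rho>). v y \<le> level C * rad powr p)"
    unfolding local_cond_def Let_def vol_def[symmetric] exp if_not_P[OF less_irrefl]
    by (subst ereal_mult_esssup_le_iff) (simp_all add: vol_neq_zero rad_neq_zero level_def)
  also have "\<dots> \<longleftrightarrow> (AE y in lebesgue. y \<in> ball x \<rho> \<longrightarrow> v y / rad powr p \<le> level C)"
    using rad_pos by (simp add: AE_restrict_space_iff pos_divide_le_eq)
  finally show ?thesis .
qed

lemma global_cond_one_iff:
  "global_cond 1 alt dt d C w v x \<rho> \<longleftrightarrow>
    (AE y in lebesgue. y \<notin> ball x \<rho> \<longrightarrow> v y / norm (x - y) powr p \<le> level C)"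
proof -
  have "(\<lambda>y. ereal (v y / norm (x - y) powr p)) \<in> borel_measurable (restrict_space lebesgue (UNIV - ball x \<rho>))"
    by (rule measurable_restrict_space1) measurable
  then show ?thesis
    unfolding global_cond_def Let_def vol_def[symmetric] kernel_exp_eq[symmetric]
      if_not_P[OF less_irrefl]
    by (subst ereal_mult_esssup_le_iff) (simp_all add: vol_neq_zero level_def AE_restrict_space_iff)
qed

lemma local_global_one_iff:
  "local_cond 1 alt dt C w v x \<rho> \<and> global_cond 1 alt dt d C w v x \<rho> \<longleftrightarrow>
    (AE y in lebesgue. v y / split_dist y powr p \<le> level C)"
proof -
  have pointwise: "((y \<in> ball x \<rho> \<longrightarrow> v y / rad powr p \<le> level C) \<and>
      (y \<notin> ball x \<rho> \<longrightarrow> v y / norm (x - y) powr p \<le> level C)) \<longleftrightarrow>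
      v y / split_dist y powr p \<le> level C" for y
    by (simp add: split_dist_def)
  show ?thesis
    unfolding local_cond_one_iff global_cond_one_iff AE_conj_iff[symmetric] pointwise ..
qed

lemma H_cond_gt_one_iff:
  assumes "1 < r" "conj_exp r = ereal q" "1 \<le> q"
  shows "H_cond r alt dt d C w v x \<rho> \<longleftrightarrow> 0 \<le> level C \<and>
    (\<integral>\<^sup>+ y. ennreal (v y powr q / (rad + norm (x - y)) powr (q * p)) \<partial>lebesgue)
      \<le> ennreal (level C powr q)"
  unfolding H_cond_def Let_def vol_def[symmetric] rad_def[symmetric] kernel_exp_eq[symmetric]
    if_P[OF assms(1)] assms(2) real_of_ereal.simps(1)
  using assms(3) by (subst ereal_mult_root_ereal_le_iff) (simp_all add: vol_neq_zero level_def)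

lemma global_cond_gt_one_iff:
  assumes "1 < r" "conj_exp r = ereal q" "1 \<le> q"
  shows "global_cond r alt dt d C w v x \<rho> \<longleftrightarrow> 0 \<le> level C \<and>
    (\<integral>\<^sup>+ y\<in>UNIV - ball x \<rho>. ennreal (v y powr q / norm (x - y) powr (q * p)) \<partial>lebesgue)
      \<le> ennreal (level C powr q)"
  unfolding global_cond_def Let_def vol_def[symmetric] kernel_exp_eq[symmetric]
    if_P[OF assms(1)] assms(2) real_of_ereal.simps(1)
  using assms(3) by (subst ereal_mult_root_ereal_le_iff) (simp_all add: vol_neq_zero level_def)

lemma local_cond_gt_one_iff:
  assumes "1 < r" "conj_exp r = ereal q" "1 \<le> q" "inv_exp r + 1 / q = 1"
  shows "local_cond r alt dt C w v x \<rho> \<longleftrightarrow> 0 \<le> level C \<and>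
    ennreal (rad powr - (q * p)) * (\<integral>\<^sup>+ y\<in>ball x \<rho>. ennreal (v y powr q) \<partial>lebesgue)
      \<le> ennreal (level C powr q)"
proof -
  define L where "L = (\<integral>\<^sup>+ y\<in>ball x \<rho>. ennreal (v y powr q) \<partial>lebesgue)"
  define t where "t = level C * rad powr p / vol powr (1 / q)"
  have "(alt - dt) / real DIM('a) - inv_exp r = (alt - dt) / real DIM('a) - 1 + 1 / q"
    using assms(4) by simp
  then have "vol powr ((alt - dt) / real DIM('a) - inv_exp r) =
      vol powr (1 / q) * vol powr ((d - dt) / real DIM('a)) / rad powr p"
    by (simp only: vol_powr_local_exp)
  then have "C * set_lebesgue_integral lebesgue (ball x \<rho>) w / vol /
      vol powr ((alt - dt) / real DIM('a) - inv_exp r) = t"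
    unfolding t_def level_def using vol_neq_zero rad_neq_zero by (simp add: field_simps)
  then have "local_cond r alt dt C w v x \<rho> \<longleftrightarrow> 0 \<le> t \<and> ennreal (1 / vol) * L \<le> ennreal (t powr q)"
    unfolding local_cond_def Let_def vol_def[symmetric] L_def[symmetric]
      if_P[OF assms(1)] assms(2) real_of_ereal.simps(1)
    using assms(3) by (subst ereal_mult_root_ereal_le_iff) (simp_all add: vol_neq_zero)
  also have "0 \<le> t \<longleftrightarrow> 0 \<le> level C"
    unfolding t_def using vol_pos rad_pos by (simp add: zero_le_divide_iff zero_le_mult_iff)
  also have "0 \<le> level C \<Longrightarrow> t powr q = level C powr q * rad powr (q * p) / vol"
    unfolding t_def using vol_pos rad_pos assms(3)
    by (simp add: powr_divide powr_mult powr_powr mult.commute)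
  then have "0 \<le> level C \<and> ennreal (1 / vol) * L \<le> ennreal (t powr q) \<longleftrightarrow>
      0 \<le> level C \<and> L \<le> ennreal (level C powr q * rad powr (q * p))"
    using vol_pos by (auto simp: ennreal_mult_le_ennreal_iff)
  also have "\<dots> \<longleftrightarrow> 0 \<le> level C \<and> ennreal (rad powr - (q * p)) * L \<le> ennreal (level C powr q)"
    using rad_pos by (simp add: ennreal_mult_le_ennreal_iff powr_minus divide_inverse)
  finally show ?thesis
    unfolding L_def .
qed

lemma H_cond_imp_local_global_gt_one:
  assumes "1 < r" "H_cond r alt dt d C w v x \<rho>"
  defines "C' \<equiv> kernel_const DIM('a) powr p * C"
  shows "local_cond r alt dt C' w v x \<rho> \<and> global_cond r alt dt d C' w v x \<rho>"
proof -
  obtain q where q: "conj_exp r = ereal q" "1 \<le> q" "inv_exp r + 1 / q = 1"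
    using conj_exp_finite[OF assms(1)] .
  let ?c = "kernel_const DIM('a)"
  have vq: "(\<lambda>y. v y powr q) \<in> borel_measurable lebesgue"
    by measurable
  have C_nonneg: "0 \<le> level C"
    and H_le: "(\<integral>\<^sup>+ y. ennreal (v y powr q / (rad + norm (x - y)) powr (q * p)) \<partial>lebesgue)
      \<le> ennreal (level C powr q)"
    using assms(2) unfolding H_cond_gt_one_iff[OF assms(1) q(1,2)] by auto
  have "ennreal (rad powr - (q * p)) * (\<integral>\<^sup>+ y\<in>ball x \<rho>. ennreal (v y powr q) \<partial>lebesgue) +
      (\<integral>\<^sup>+ y\<in>UNIV - ball x \<rho>. ennreal (v y powr q / norm (x - y) powr (q * p)) \<partial>lebesgue) =
      (\<integral>\<^sup>+ y. ennreal (v y powr q / split_dist y powr (q * p)) \<partial>lebesgue)"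
    using vq by (rule nn_integral_split_dist[symmetric])
  also have "\<dots> \<le> ennreal (?c powr (q * p)) *
      (\<integral>\<^sup>+ y. ennreal (v y powr q / (rad + norm (x - y)) powr (q * p)) \<partial>lebesgue)"
    by (rule nn_integral_split_dist_le_kernel[OF vq]) (use q(2) kernel_exp_pos in auto)
  also have "\<dots> \<le> ennreal (?c powr (q * p)) * ennreal (level C powr q)"
    using H_le by (rule mult_left_mono) simp
  also have "\<dots> = ennreal (level C' powr q)"
  proof -
    have "level C' powr q = ?c powr (q * p) * level C powr q"
      unfolding C'_def level_scale by (simp add: powr_mult powr_powr mult.commute)
    then show ?thesis
      by (simp add: ennreal_mult'[symmetric])
  qed
  finally have "ennreal (rad powr - (q * p)) * (\<integral>\<^sup>+ y\<in>ball x \<rho>. ennreal (v y powr q) \<partial>lebesgue) +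
      (\<integral>\<^sup>+ y\<in>UNIV - ball x \<rho>. ennreal (v y powr q / norm (x - y) powr (q * p)) \<partial>lebesgue)
      \<le> ennreal (level C' powr q)" .
  moreover have "0 \<le> level C'"
    unfolding C'_def level_scale using C_nonneg by simp
  ultimately show ?thesis
    unfolding local_cond_gt_one_iff[OF assms(1) q] global_cond_gt_one_iff[OF assms(1) q(1,2)]
    by (auto intro: order_trans[rotated])
qed

lemma H_cond_imp_local_global_one:
  assumes "H_cond 1 alt dt d C w v x \<rho>"
  defines "C' \<equiv> kernel_const DIM('a) powr p * C"
  shows "local_cond 1 alt dt C' w v x \<rho> \<and> global_cond 1 alt dt d C' w v x \<rho>"
proof -
  have "AE y in lebesgue. v y / (rad + norm (x - y)) powr p \<le> level C"
    using assms(1) unfolding H_cond_one_iff .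
  then have "AE y in lebesgue. v y / split_dist y powr p \<le> level C'"
  proof eventually_elim
    case (elim y)
    have "v y / split_dist y powr p \<le> kernel_const DIM('a) powr p * (v y / (rad + norm (x - y)) powr p)"
      using v_nonneg kernel_exp_pos by (intro kernel_comparable(2)) auto
    also have "\<dots> \<le> level C'"
      unfolding C'_def level_scale using elim by (intro mult_left_mono) auto
    finally show ?case .
  qed
  then show ?thesis
    unfolding local_global_one_iff .
qed

lemma H_cond_imp_local_global:
  assumes "1 \<le> r" "H_cond r alt dt d C w v x \<rho>"
  shows "local_cond r alt dt (kernel_const DIM('a) powr p * C) w v x \<rho> \<and>
    global_cond r alt dt d (kernel_const DIM('a) powr p * C) w v x \<rho>"
proof (cases "1 < r")
  case True
  then show ?thesis
    using assms(2) by (rule H_cond_imp_local_global_gt_one)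
next
  case False
  with assms show ?thesis
    using H_cond_imp_local_global_one by simp
qed

lemma local_global_imp_H_cond_gt_one:
  assumes "1 < r" "local_cond r alt dt C w v x \<rho>" "global_cond r alt dt d C w v x \<rho>"
  shows "H_cond r alt dt d (2 * C) w v x \<rho>"
proof -
  obtain q where q: "conj_exp r = ereal q" "1 \<le> q" "inv_exp r + 1 / q = 1"
    using conj_exp_finite[OF assms(1)] .
  have vq: "(\<lambda>y. v y powr q) \<in> borel_measurable lebesgue"
    by measurable
  have C_nonneg: "0 \<le> level C"
    and local_le: "ennreal (rad powr - (q * p)) * (\<integral>\<^sup>+ y\<in>ball x \<rho>. ennreal (v y powr q) \<partial>lebesgue)
      \<le> ennreal (level C powr q)"
    and global_le: "(\<integral>\<^sup>+ y\<in>UNIV - ball x \<rho>. ennreal (v y powr q / norm (x - y) powr (q * p)) \<partial>lebesgue)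
      \<le> ennreal (level C powr q)"
    using assms(2,3) unfolding local_cond_gt_one_iff[OF assms(1) q] global_cond_gt_one_iff[OF assms(1) q(1,2)]
    by auto
  have "(\<integral>\<^sup>+ y. ennreal (v y powr q / (rad + norm (x - y)) powr (q * p)) \<partial>lebesgue)
      \<le> (\<integral>\<^sup>+ y. ennreal (v y powr q / split_dist y powr (q * p)) \<partial>lebesgue)"
    using q(2) kernel_exp_pos by (intro nn_integral_kernel_le_split_dist) auto
  also have "\<dots> = ennreal (rad powr - (q * p)) * (\<integral>\<^sup>+ y\<in>ball x \<rho>. ennreal (v y powr q) \<partial>lebesgue) +
      (\<integral>\<^sup>+ y\<in>UNIV - ball x \<rho>. ennreal (v y powr q / norm (x - y) powr (q * p)) \<partial>lebesgue)"
    using vq by (rule nn_integral_split_dist)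
  also have "\<dots> \<le> ennreal (2 * level C powr q)"
    using add_mono[OF local_le global_le] by (simp add: ennreal_plus[symmetric])
  also have "\<dots> \<le> ennreal (level (2 * C) powr q)"
  proof -
    have "2 \<le> (2::real) powr q"
      using q(2) powr_mono[of 1 q 2] by simp
    then have "2 * level C powr q \<le> 2 powr q * level C powr q"
      by (rule mult_right_mono) simp
    then show ?thesis
      using C_nonneg by (simp add: level_scale powr_mult ennreal_leI)
  qed
  finally show ?thesis
    unfolding H_cond_gt_one_iff[OF assms(1) q(1,2)] level_scale using C_nonneg by simp
qed

lemma local_global_imp_H_cond_one:
  assumes "local_cond 1 alt dt C w v x \<rho>" "global_cond 1 alt dt d C w v x \<rho>"
  shows "H_cond 1 alt dt d (2 * C) w v x \<rho>"
proof -
  have AE_split: "AE y in lebesgue. v y / split_dist y powr p \<le> level C"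
    using assms unfolding local_global_one_iff[symmetric] ..
  then have "AE y::'a in lebesgue. 0 \<le> level C"
    by (rule eventually_mono) (use v_nonneg in \<open>meson divide_nonneg_nonneg powr_ge_zero order_trans\<close>)
  then have "0 \<le> level C"
    by (simp add: eventually_const_iff ae_filter_eq_bot_iff emeasure_completion)
  from AE_split have "AE y in lebesgue. v y / (rad + norm (x - y)) powr p \<le> level (2 * C)"
  proof eventually_elim
    case (elim y)
    have "v y / (rad + norm (x - y)) powr p \<le> v y / split_dist y powr p"
      using v_nonneg kernel_exp_pos by (intro kernel_comparable(1)) auto
    then show ?case
      using elim \<open>0 \<le> level C\<close> by (simp add: level_scale)
  qed
  then show ?thesis
    unfolding H_cond_one_iff .
qed

lemma local_global_imp_H_cond:
  assumes "1 \<le> r" "local_cond r alt dt C w v x \<rho>" "global_cond r alt dt d C w v x \<rho>"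
  shows "H_cond r alt dt d (2 * C) w v x \<rho>"
proof (cases "1 < r")
  case True
  then show ?thesis
    using assms(2,3) by (rule local_global_imp_H_cond_gt_one)
next
  case False
  with assms show ?thesis
    using local_global_imp_H_cond_one by simp
qed

end

theorem lemma3p4:
  fixes w v :: "'a::euclidean_space \<Rightarrow> real"
    and \<alpha> \<eta> \<delta> \<alpha>t \<delta>t :: real and m :: nat and r :: ereal
  assumes "0 \<le> \<alpha>" "\<alpha> < real DIM('a)"
    and "0 < \<eta>" "\<eta> \<le> 1"
    and "0 < \<delta>" "\<delta> < \<eta>" "m > 0 \<longrightarrow> \<delta> < (real DIM('a) - \<alpha>) / real m"
    and "1 \<le> r"
    and "\<alpha>t = real m * \<delta> + \<alpha>" "\<delta>t \<le> \<delta>"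
    and "weight w" "weight v"
  shows "inH r \<alpha>t \<delta>t \<delta> w v \<longleftrightarrow>
    (\<exists>C::real. \<forall>x::'a. \<forall>\<rho>>0.
        local_cond r \<alpha>t \<delta>t C w v x \<rho> \<and> global_cond r \<alpha>t \<delta>t \<delta> C w v x \<rho>)"
proof -
  have "0 < real DIM('a) - \<alpha>t + \<delta>"
  proof (cases "m = 0")
    case False
    then have "\<delta> * real m < real DIM('a) - \<alpha>"
      using assms(7) by (simp add: pos_less_divide_eq)
    then show ?thesis
      using assms(5,9) by (simp add: algebra_simps)
  qed (use assms(2,5,9) in simp)
  then have ball: "ball_conditions v \<alpha>t \<delta> (real DIM('a) - \<alpha>t + \<delta>) \<rho>" if "0 < \<rho>" for \<rho>
    using weight_borel_measurable[OF assms(12)] assms(12) that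
    by unfold_locales (auto simp: weight_def)
  define c where "c = kernel_const DIM('a) powr (real DIM('a) - \<alpha>t + \<delta>)"
  have "local_cond r \<alpha>t \<delta>t (c * C) w v x \<rho> \<and> global_cond r \<alpha>t \<delta>t \<delta> (c * C) w v x \<rho>"
    if "0 < \<rho>" "H_cond r \<alpha>t \<delta>t \<delta> C w v x \<rho>" for C x \<rho>
    unfolding c_def by (rule ball_conditions.H_cond_imp_local_global[OF ball[OF that(1)] assms(8) that(2)])
  moreover have "H_cond r \<alpha>t \<delta>t \<delta> (2 * C) w v x \<rho>"
    if "0 < \<rho>" "local_cond r \<alpha>t \<delta>t C w v x \<rho>" "global_cond r \<alpha>t \<delta>t \<delta> C w v x \<rho>" for C x \<rho>
    by (rule ball_conditions.local_global_imp_H_cond[OF ball[OF that(1)] assms(8) that(2,3)])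
  ultimately show ?thesis
    unfolding inH_iff_H_cond by blast
qed

end
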